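(* Let $(V,L,\varphi,E)$ be a valuation system and let $$\Pi L:=\{\textstyle\bigwedge_n a_n \;:\; a_1\ge a_2\ge\cdots \text{ is a } \varphi\text{-convergent sequence in } L\}.$$ Then $\Pi L$ is a sublattice of $V$, and $L$ is a sublattice of $\Pi L$.
   Context: A valuation system $(V,L,\varphi,E)$ consists of: (i) a lattice $V$ which is $\sigma$-distributive, i.e. for every $a\in V$ and every sequence $(b_n)$ in $V$ whose infimum exists, $\bigwedge_n(a\vee b_n)$ exists and equals $a\vee\bigwedge_n b_n$, and dually whenever $\bigvee_n b_n$ exists, $\bigvee_n(a\wedge b_n)$ exists and equals $a\wedge\bigvee_n b_n$; (ii) a sublattice $L$ of $V$; (iii) a partially ordered abelian group $E$ which is R-complete: whenever $x_1\ge x_2\ge\cdots$ and $y_1\ge y_2\ge\cdots$ are sequences in $E$ for which $\bigwedge_n(x_n+y_n)$ exists, then $\bigwedge_n x_n$ and $\bigwedge_n y_n$ exist, and dually for increasing sequences and suprema; (iv) a valuation $\varphi:L\to E$, i.e. an order-preserving map with $\varphi(a\wedge b)+\varphi(a\vee b)=\varphi(a)+\varphi(b)$ for all $a,b\in L$. A decreasing sequence $a_1\ge a_2\ge\cdots$ in $L$ is $\varphi$-convergent if $\bigwedge_n a_n$ exists in $V$ and $\bigwedge_n\varphi(a_n)$ exists in $E$. *)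

theory Defs
  imports Main
begin

definition is_glb :: "'a::order set \<Rightarrow> 'a \<Rightarrow> bool" where
  "is_glb S x \<longleftrightarrow> (\<forall>s\<in>S. x \<le> s) \<and> (\<forall>z. (\<forall>s\<in>S. z \<le> s) \<longrightarrow> z \<le> x)"

definition is_lub :: "'a::order set \<Rightarrow> 'a \<Rightarrow> bool" where
  "is_lub S x \<longleftrightarrow> (\<forall>s\<in>S. s \<le> x) \<and> (\<forall>z. (\<forall>s\<in>S. s \<le> z) \<longrightarrow> x \<le> z)"

text \<open>The lattice V is the type 'v; sigma-distributivity.\<close>
definition sigma_distributive :: "'v::lattice itself \<Rightarrow> bool" where
  "sigma_distributive _ \<longleftrightarrow>
     (\<forall>(a::'v) (b::nat \<Rightarrow> 'v) c. is_glb (range b) c \<longrightarrow>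
         is_glb (range (\<lambda>n. sup a (b n))) (sup a c)) \<and>
     (\<forall>(a::'v) (b::nat \<Rightarrow> 'v) c. is_lub (range b) c \<longrightarrow>
         is_lub (range (\<lambda>n. inf a (b n))) (inf a c))"

definition R_complete :: "'e::ordered_ab_group_add itself \<Rightarrow> bool" where
  "R_complete _ \<longleftrightarrow>
     (\<forall>(x::nat \<Rightarrow> 'e) y. antimono x \<and> antimono y \<and> (\<exists>s. is_glb (range (\<lambda>n. x n + y n)) s) \<longrightarrow>
         (\<exists>u. is_glb (range x) u) \<and> (\<exists>v. is_glb (range y) v)) \<and>
     (\<forall>(x::nat \<Rightarrow> 'e) y. mono x \<and> mono y \<and> (\<exists>s. is_lub (range (\<lambda>n. x n + y n)) s) \<longrightarrow>
         (\<exists>u. is_lub (range x) u) \<and> (\<exists>v. is_lub (range y) v))"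

definition sublattice :: "'v::lattice set \<Rightarrow> bool" where
  "sublattice S \<longleftrightarrow> (\<forall>a\<in>S. \<forall>b\<in>S. inf a b \<in> S \<and> sup a b \<in> S)"

definition sublattice_of :: "'v::lattice set \<Rightarrow> 'v set \<Rightarrow> bool" where
  "sublattice_of S M \<longleftrightarrow> S \<subseteq> M \<and> sublattice S"

definition valuation :: "'v::lattice set \<Rightarrow> ('v \<Rightarrow> 'e::ordered_ab_group_add) \<Rightarrow> bool" where
  "valuation L \<phi> \<longleftrightarrow>
     (\<forall>a\<in>L. \<forall>b\<in>L. a \<le> b \<longrightarrow> \<phi> a \<le> \<phi> b) \<and>
     (\<forall>a\<in>L. \<forall>b\<in>L. \<phi> (inf a b) + \<phi> (sup a b) = \<phi> a + \<phi> b)"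

definition valuation_system ::
    "'v::lattice set \<Rightarrow> ('v \<Rightarrow> 'e::ordered_ab_group_add) \<Rightarrow> bool" where
  "valuation_system L \<phi> \<longleftrightarrow> sigma_distributive TYPE('v) \<and> sublattice L \<and>
     R_complete TYPE('e) \<and> valuation L \<phi>"

definition phi_convergent ::
    "'v::lattice set \<Rightarrow> ('v \<Rightarrow> 'e::ordered_ab_group_add) \<Rightarrow> (nat \<Rightarrow> 'v) \<Rightarrow> bool" where
  "phi_convergent L \<phi> a \<longleftrightarrow> (\<forall>n. a n \<in> L) \<and> antimono a \<and>
     (\<exists>c. is_glb (range a) c) \<and> (\<exists>e. is_glb (range (\<lambda>n. \<phi> (a n))) e)"

definition PiL :: "'v::lattice set \<Rightarrow> ('v \<Rightarrow> 'e::ordered_ab_group_add) \<Rightarrow> 'v set" where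
  "PiL L \<phi> = {c. \<exists>a. phi_convergent L \<phi> a \<and> is_glb (range a) c}"

end

theory Submission
  imports Defs
begin

text \<open>If \<open>a\<^sub>n \<down> c\<close> and \<open>b\<^sub>n \<down> d\<close> are \<open>\<phi>\<close>-convergent, then so are \<open>a\<^sub>n \<sqinter> b\<^sub>n \<down> c \<sqinter> d\<close> and
  \<open>a\<^sub>n \<squnion> b\<^sub>n \<down> c \<squnion> d\<close>: the limit of the joins is given by \<open>\<sigma>\<close>-distributivity, and
  since \<open>\<phi>(a\<^sub>n \<sqinter> b\<^sub>n) + \<phi>(a\<^sub>n \<squnion> b\<^sub>n) = \<phi>(a\<^sub>n) + \<phi>(b\<^sub>n)\<close> decreases to \<open>\<Sqinter>\<phi>(a\<^sub>n) + \<Sqinter>\<phi>(b\<^sub>n)\<close>,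
  R-completeness yields the infima of both summands. Constant sequences show \<open>L \<subseteq> \<Pi>L\<close>.\<close>

lemma is_glb_singleton: "is_glb {x} x"
  unfolding is_glb_def by auto

lemma is_glb_add:
  fixes x y :: "nat \<Rightarrow> 'e::ordered_ab_group_add"
  assumes ax: "antimono x" and ay: "antimono y"
    and gu: "is_glb (range x) u" and gv: "is_glb (range y) v"
  shows "is_glb (range (\<lambda>n. x n + y n)) (u + v)"
  unfolding is_glb_def
proof (intro conjI allI impI ballI)
  fix s assume "s \<in> range (\<lambda>n. x n + y n)"
  then obtain n where s: "s = x n + y n" by auto
  have "u \<le> x n" "v \<le> y n" using gu gv unfolding is_glb_def by auto
  then show "u + v \<le> s" using s add_mono by blast
next
  fix z assume z: "\<forall>s\<in>range (\<lambda>n. x n + y n). z \<le> s"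
  have "z - y n \<le> x m" for m n
  proof -
    have "z \<le> x (max m n) + y (max m n)" using z by auto
    also have "\<dots> \<le> x m + y n"
      using ax ay by (intro add_mono) (auto simp: antimono_def)
    finally show ?thesis by (simp add: algebra_simps)
  qed
  then have "z - y n \<le> u" for n using gu unfolding is_glb_def by auto
  then have "z - u \<le> y n" for n by (simp add: algebra_simps)
  then have "z - u \<le> v" using gv unfolding is_glb_def by auto
  then show "z \<le> u + v" by (simp add: algebra_simps)
qed

lemma is_glb_inf:
  fixes a b :: "nat \<Rightarrow> 'v::lattice"
  assumes "is_glb (range a) c" "is_glb (range b) d"
  shows "is_glb (range (\<lambda>n. inf (a n) (b n))) (inf c d)"
  using assms unfolding is_glb_def by (auto intro: le_infI1 le_infI2)

lemma is_glb_sup: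
  fixes a b :: "nat \<Rightarrow> 'v::lattice"
  assumes sd: "sigma_distributive TYPE('v)"
    and aa: "antimono a" and ab: "antimono b"
    and gc: "is_glb (range a) c" and gd: "is_glb (range b) d"
  shows "is_glb (range (\<lambda>n. sup (a n) (b n))) (sup c d)"
  unfolding is_glb_def
proof (intro conjI allI impI ballI)
  fix s assume "s \<in> range (\<lambda>n. sup (a n) (b n))"
  then obtain n where s: "s = sup (a n) (b n)" by auto
  have "c \<le> a n" "d \<le> b n" using gc gd unfolding is_glb_def by auto
  then show "sup c d \<le> s" using s sup_mono by blast
next
  fix z assume z: "\<forall>s\<in>range (\<lambda>n. sup (a n) (b n)). z \<le> s"
  have below: "z \<le> sup (a m) (b n)" for m n
  proof -
    have "z \<le> sup (a (max m n)) (b (max m n))" using z by auto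
    also have "\<dots> \<le> sup (a m) (b n)"
      using aa ab by (intro sup_mono) (auto simp: antimono_def)
    finally show ?thesis .
  qed
  have "is_glb (range (\<lambda>n. sup (a m) (b n))) (sup (a m) d)" for m
    using sd gd unfolding sigma_distributive_def by blast
  then have "z \<le> sup d (a m)" for m
    using below[of m] unfolding is_glb_def by (auto simp: sup_commute)
  moreover have "is_glb (range (\<lambda>m. sup d (a m))) (sup d c)"
    using sd gc unfolding sigma_distributive_def by blast
  ultimately have "z \<le> sup d c" unfolding is_glb_def by auto
  then show "z \<le> sup c d" by (simp add: sup_commute)
qed

lemma valuation_antimono:
  assumes "valuation L \<phi>" "\<And>n. a n \<in> L" "antimono a"
  shows "antimono (\<lambda>n. \<phi> (a n))"
  using assms unfolding valuation_def antimono_def by blast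

lemma valuation_glb_inf_sup_exist:
  fixes \<phi> :: "'v::lattice \<Rightarrow> 'e::ordered_ab_group_add"
  assumes rc: "R_complete TYPE('e)" and val: "valuation L \<phi>" and sl: "sublattice L"
    and pa: "phi_convergent L \<phi> a" and pb: "phi_convergent L \<phi> b"
  shows "(\<exists>u. is_glb (range (\<lambda>n. \<phi> (inf (a n) (b n)))) u) \<and>
         (\<exists>v. is_glb (range (\<lambda>n. \<phi> (sup (a n) (b n)))) v)"
proof -
  have aL: "a n \<in> L" "b n \<in> L" and aa: "antimono a" and ab: "antimono b" for n
    using pa pb unfolding phi_convergent_def by auto
  obtain e1 e2 where e1: "is_glb (range (\<lambda>n. \<phi> (a n))) e1"
    and e2: "is_glb (range (\<lambda>n. \<phi> (b n))) e2"
    using pa pb unfolding phi_convergent_def by auto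
  have "antimono (\<lambda>n. inf (a n) (b n))" "antimono (\<lambda>n. sup (a n) (b n))"
    using aa ab unfolding antimono_def by (auto intro: le_infI1 le_infI2 le_supI1 le_supI2)
  moreover have "inf (a n) (b n) \<in> L" "sup (a n) (b n) \<in> L" for n
    using sl aL unfolding sublattice_def by auto
  ultimately have anti: "antimono (\<lambda>n. \<phi> (inf (a n) (b n)))" "antimono (\<lambda>n. \<phi> (sup (a n) (b n)))"
    using val by (auto intro: valuation_antimono)
  have "(\<lambda>n. \<phi> (inf (a n) (b n)) + \<phi> (sup (a n) (b n))) = (\<lambda>n. \<phi> (a n) + \<phi> (b n))"
    using val aL unfolding valuation_def by auto
  moreover have "is_glb (range (\<lambda>n. \<phi> (a n) + \<phi> (b n))) (e1 + e2)"
    using val aL aa ab e1 e2 by (intro is_glb_add valuation_antimono)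
  ultimately have "is_glb (range (\<lambda>n. \<phi> (inf (a n) (b n)) + \<phi> (sup (a n) (b n)))) (e1 + e2)"
    by metis
  then show ?thesis using rc anti unfolding R_complete_def by blast
qed

lemma phi_convergent_const: "x \<in> L \<Longrightarrow> phi_convergent L \<phi> (\<lambda>_. x)"
  unfolding phi_convergent_def antimono_def by (auto intro: is_glb_singleton)

lemma phi_convergent_inf_sup:
  fixes L :: "'v::lattice set" and \<phi> :: "'v \<Rightarrow> 'e::ordered_ab_group_add"
  assumes vs: "valuation_system L \<phi>"
    and pa: "phi_convergent L \<phi> a" and pb: "phi_convergent L \<phi> b"
    and gc: "is_glb (range a) c" and gd: "is_glb (range b) d"
  shows "phi_convergent L \<phi> (\<lambda>n. inf (a n) (b n))" "phi_convergent L \<phi> (\<lambda>n. sup (a n) (b n))"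
proof -
  have sd: "sigma_distributive TYPE('v)" and sl: "sublattice L"
    using vs unfolding valuation_system_def by auto
  have aL: "a n \<in> L" "b n \<in> L" and aa: "antimono a" and ab: "antimono b" for n
    using pa pb unfolding phi_convergent_def by auto
  have "inf (a n) (b n) \<in> L" "sup (a n) (b n) \<in> L" for n
    using sl aL unfolding sublattice_def by auto
  moreover have "antimono (\<lambda>n. inf (a n) (b n))" "antimono (\<lambda>n. sup (a n) (b n))"
    using aa ab unfolding antimono_def by (auto intro: le_infI1 le_infI2 le_supI1 le_supI2)
  moreover have "is_glb (range (\<lambda>n. inf (a n) (b n))) (inf c d)"
    using gc gd by (rule is_glb_inf)
  moreover have "is_glb (range (\<lambda>n. sup (a n) (b n))) (sup c d)"
    using sd aa ab gc gd by (rule is_glb_sup)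
  moreover have "(\<exists>u. is_glb (range (\<lambda>n. \<phi> (inf (a n) (b n)))) u) \<and>
                 (\<exists>v. is_glb (range (\<lambda>n. \<phi> (sup (a n) (b n)))) v)"
    using vs pa pb unfolding valuation_system_def by (intro valuation_glb_inf_sup_exist) auto
  ultimately show "phi_convergent L \<phi> (\<lambda>n. inf (a n) (b n))"
    "phi_convergent L \<phi> (\<lambda>n. sup (a n) (b n))"
    unfolding phi_convergent_def by blast+
qed

lemma subset_PiL: "L \<subseteq> PiL L \<phi>"
  unfolding PiL_def using phi_convergent_const is_glb_singleton by fastforce

lemma sublattice_PiL:
  assumes "valuation_system L \<phi>"
  shows "sublattice (PiL L \<phi>)"
  unfolding sublattice_def
proof (intro ballI conjI)
  fix c d assume "c \<in> PiL L \<phi>" "d \<in> PiL L \<phi>"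
  then obtain a b where pa: "phi_convergent L \<phi> a" and gc: "is_glb (range a) c"
    and pb: "phi_convergent L \<phi> b" and gd: "is_glb (range b) d"
    unfolding PiL_def by auto
  have "is_glb (range (\<lambda>n. inf (a n) (b n))) (inf c d)"
    using gc gd by (rule is_glb_inf)
  with phi_convergent_inf_sup(1)[OF assms pa pb gc gd] show "inf c d \<in> PiL L \<phi>"
    unfolding PiL_def by blast
  have "is_glb (range (\<lambda>n. sup (a n) (b n))) (sup c d)"
    using assms pa pb gc gd unfolding valuation_system_def phi_convergent_def
    by (intro is_glb_sup) auto
  with phi_convergent_inf_sup(2)[OF assms pa pb gc gd] show "sup c d \<in> PiL L \<phi>"
    unfolding PiL_def by blast
qed

theorem lemma5p2:
  fixes L :: "'v::lattice set" and \<phi> :: "'v \<Rightarrow> 'e::ordered_ab_group_add"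
  assumes "valuation_system L \<phi>"
  shows "sublattice (PiL L \<phi>) \<and> sublattice_of L (PiL L \<phi>)"
  using assms sublattice_PiL subset_PiL
  unfolding sublattice_of_def valuation_system_def by blast

end
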